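(* Under Algorithm 2(a) below, let $Q(t)$ be the size of the sender's queue after the arrivals in slot $t$ have been appended (end of Step 3). Then $$Q(t)=\dim V(t)-\dim V_\Delta(t),$$ where $V(t)=\mathbb{F}_q^{A(t)}$ with $A(t)$ the total number of arrivals up to and including slot $t$, and $V_\Delta(t)=\bigcap_{j=1}^nV_j(t)$ with $V_j(t)$ the knowledge space of receiver $j$ at the end of Step 3 of slot $t$.
   Context: Model: a sender broadcasts to $n$ receivers over a slotted packet erasure broadcast channel; packets are vectors over $\mathbb{F}_q$, indexed by arrival order; each slot some packets may arrive at the sender (just after the slot begins); the sender transmits at most one linear combination of its stored packets per slot; each receiver either receives it or suffers an erasure, and the sender learns via perfect feedback before the end of the slot which receivers received it. The knowledge space of a node is the space of global coefficient vectors (with respect to all original packets arrived so far) of linear combinations it can compute. Algorithm 2(a) (field size $q>n$): The sender stores queue contents $\mathbf{y}_1,\dots,\mathbf{y}_Q$ and matrices $B,B_1,\dots,B_n$ with $Q$ columns whose rows are local coefficient vectors (with respect to the current queue contents); initially all empty. In every slot: (Step 3) if $a$ packets arrive, append them to the queue, set $B=I_Q$ for the new $Q$, append $a$ zero columns to each $B_j$. (Step 4) If the queue is nonempty, choose $\mathbf{g}\in\mathrm{span}(B)$ with $\mathbf{g}\notin\mathrm{span}(B_j)$ for every $j$ with $\mathrm{span}(B_j)\neq\mathrm{span}(B)$ (row spaces), transmit $\sum_i g_i\mathbf{y}_i$; else $\mathbf{g}=\mathbf{0}$, transmit nothing. (Step 5) If $\mathbf{g}\ne\mathbf{0}$ and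 receiver $j$ received it, append $\mathbf{g}$ as a row of $B_j$. (Step 6) $B_\Delta$: a basis of $\bigcap_j\mathrm{span}(B_j)$; $B'$: completion of $B_\Delta$ to a basis of $\mathrm{span}(B)$, $B''=B'\setminus B_\Delta$; $B_j'$: completion of $B_\Delta$ to a basis of $\mathrm{span}(B_j)$ with $B_j'':=B_j'\setminus B_\Delta\subseteq\mathrm{span}(B'')$. (Step 7) Replace the queue by $\sum_i h_i\mathbf{y}_i$, $\mathbf{h}\in B''$. (Step 8) Replace $B_j$ by $X_j$ where $B_j''=X_jB''$; set $B=I_{|B''|}$. *)

theory Defs
  imports Main HOL.Vector_Spaces "HOL-Library.Function_Algebras"
begin

text \<open>Vectors over the field 'a (global or local coefficient vectors) are represented as
  finitely supported functions nat => 'a; a vector of F_q^m is one vanishing from index m on.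
  Appending zero columns to a matrix is then automatic.\<close>

definition sc :: "'a::field \<Rightarrow> (nat \<Rightarrow> 'a) \<Rightarrow> (nat \<Rightarrow> 'a)" where
  "sc c v = (\<lambda>i. c * v i)"

interpretation fv: vector_space "sc :: 'a::field \<Rightarrow> (nat \<Rightarrow> 'a) \<Rightarrow> (nat \<Rightarrow> 'a)"
  by unfold_locales (auto simp: sc_def algebra_simps fun_eq_iff)

definition unitv :: "nat \<Rightarrow> nat \<Rightarrow> 'a::field" where
  "unitv i = (\<lambda>k. if k = i then 1 else 0)"

definition lincomb :: "(nat \<Rightarrow> 'a::field) \<Rightarrow> (nat \<Rightarrow> 'a) list \<Rightarrow> (nat \<Rightarrow> 'a)" where
  "lincomb g ys = (\<lambda>k. \<Sum>i<length ys. g i * (ys ! i) k)"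

definition Fspace :: "nat \<Rightarrow> (nat \<Rightarrow> 'a::field) set" where
  "Fspace m = {v. \<forall>i\<ge>m. v i = 0}"

text \<open>Sender/receiver state.  queue: global coefficient vectors of y_1..y_Q;
  bB, bBj j: rows of B, B_j (local coefficient vectors);
  rcv j: global coefficient vectors of all packets received so far by receiver j;
  arr: number of packets arrived so far.\<close>
record 'a state =
  arr :: nat
  queue :: "(nat \<Rightarrow> 'a) list"
  bB :: "(nat \<Rightarrow> 'a) list"
  bBj :: "nat \<Rightarrow> (nat \<Rightarrow> 'a) list"
  rcv :: "nat \<Rightarrow> (nat \<Rightarrow> 'a) set"

definition init_state :: "'a::field state" where
  "init_state = \<lparr>arr = 0, queue = [], bB = [], bBj = (\<lambda>j. []), rcv = (\<lambda>j. {})\<rparr>"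

definition know :: "'a::field state \<Rightarrow> nat \<Rightarrow> (nat \<Rightarrow> 'a) set" where
  "know s j = fv.span (rcv s j)"

definition arrive :: "nat \<Rightarrow> 'a::field state \<Rightarrow> 'a state" where
  "arrive a s = s\<lparr> arr := arr s + a,
                   queue := queue s @ map (\<lambda>k. unitv (arr s + k)) [0..<a],
                   bB := map unitv [0..<length (queue s) + a] \<rparr>"

text \<open>Steps 4--8 of a slot for n receivers (indexed 0..n-1), as a relation between the
  state after Step 3 and the state at the end of the slot; all choices of the algorithm
  (g, bases) and the erasure pattern (set R of receivers that received) are arbitrary.\<close>
definition slot_rest :: "nat \<Rightarrow> 'a::field state \<Rightarrow> 'a state \<Rightarrow> bool" where
  "slot_rest n s s' \<longleftrightarrow>
    (\<exists>g R bD bpp bjpp X.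
      (if queue s \<noteq> []
       then g \<in> fv.span (set (bB s)) \<and>
            (\<forall>j<n. fv.span (set (bBj s j)) \<noteq> fv.span (set (bB s))
                     \<longrightarrow> g \<notin> fv.span (set (bBj s j)))
       else g = 0) \<and>
      R \<subseteq> {..<n} \<and>
      (let Bj1 = (\<lambda>j. if g \<noteq> 0 \<and> j \<in> R then bBj s j @ [g] else bBj s j);
           rcv1 = (\<lambda>j. if g \<noteq> 0 \<and> j \<in> R then insert (lincomb g (queue s)) (rcv s j)
                        else rcv s j)
       in distinct bD \<and> fv.independent (set bD) \<and>
          fv.span (set bD) = (\<Inter>j<n. fv.span (set (Bj1 j))) \<and>
          distinct (bD @ bpp) \<and> fv.independent (set (bD @ bpp)) \<and>
          fv.span (set (bD @ bpp)) = fv.span (set (bB s)) \<and>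
          (\<forall>j<n. distinct (bD @ bjpp j) \<and> fv.independent (set (bD @ bjpp j)) \<and>
                 fv.span (set (bD @ bjpp j)) = fv.span (set (Bj1 j)) \<and>
                 set (bjpp j) \<subseteq> fv.span (set bpp) \<and>
                 map (\<lambda>x. lincomb x bpp) (X j) = bjpp j \<and>
                 (\<forall>x\<in>set (X j). x \<in> Fspace (length bpp))) \<and>
          s' = s\<lparr> queue := map (\<lambda>h. lincomb h (queue s)) bpp,
                  bB := map unitv [0..<length bpp],
                  bBj := X,
                  rcv := rcv1 \<rparr>))"

end

theory Submission
  imports Defs
begin

text \<open>At the start of every slot there is a list D of global coefficient vectors, a basis of the
  common knowledge V_Delta, such that D followed by the queue contents is a basis of V, the knowledge
  space of receiver j is spanned by D together with the queue combinations described by the rows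
  of B_j, and the row spaces of the B_j meet only in 0.  Arrivals append unit vectors to the queue
  and keep this invariant; in Step 6 the common part B_Delta of the row spaces is moved from the
  queue into D.  Since D @ queue is independent, the knowledge spaces intersect exactly in span D,
  so the queue length is dim V - dim V_Delta.\<close>

lemma lincomb_Nil [simp]: "lincomb c [] = 0"
  by (simp add: lincomb_def fun_eq_iff)

lemma lincomb_Cons: "lincomb c (v # vs) = sc (c 0) v + lincomb (\<lambda>i. c (Suc i)) vs"
  unfolding lincomb_def sc_def fun_eq_iff length_Cons sum.lessThan_Suc_shift by simp

lemma lincomb_append:
  "lincomb c (xs @ ys) = lincomb c xs + lincomb (\<lambda>i. c (i + length xs)) ys"
  by (induction xs arbitrary: c) (simp_all add: lincomb_Cons add.assoc)

lemma lincomb_cong: "(\<And>i. i < length vs \<Longrightarrow> c i = d i) \<Longrightarrow> lincomb c vs = lincomb d vs"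
  by (simp add: lincomb_def)

lemma lincomb_zero_coeffs [simp]: "lincomb (\<lambda>i. 0) vs = 0"
  by (simp add: lincomb_def fun_eq_iff)

lemma lincomb_zero [simp]: "lincomb 0 vs = 0"
  by (simp add: lincomb_def fun_eq_iff)

lemma lincomb_diff: "lincomb (\<lambda>i. c i - d i) vs = lincomb c vs - lincomb d vs"
  by (simp add: lincomb_def fun_eq_iff algebra_simps sum_subtractf)

lemma lincomb_scale: "lincomb (\<lambda>i. k * c i) vs = sc k (lincomb c vs)"
  by (simp add: lincomb_def fun_eq_iff sc_def sum_distrib_left algebra_simps)

lemma lincomb_lincomb:
  "lincomb c (map (\<lambda>x. lincomb x vs) ws) = lincomb (lincomb c ws) vs"
  unfolding lincomb_def
  by (auto simp: fun_eq_iff sum_distrib_left sum_distrib_right algebra_simps intro: sum.swap)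

lemma lincomb_unitv: "i < length vs \<Longrightarrow> lincomb (unitv i) vs = vs ! i"
  unfolding lincomb_def fun_eq_iff unitv_def by (simp add: if_distrib[of "\<lambda>u. u * _"] cong: if_cong)

lemma lincomb_unitv_upt: "lincomb c (map unitv [0..<m]) = (\<lambda>k. if k < m then c k else 0)"
  by (simp add: lincomb_def fun_eq_iff unitv_def if_distrib cong: if_cong)

lemma lincomb_shifted_unitv:
  "lincomb c (map (\<lambda>k. unitv (A + k)) [0..<a]) = (\<lambda>x. if A \<le> x \<and> x < A + a then c (x - A) else 0)"
proof -
  have "(\<Sum>i<a. c i * unitv (A + i) x) = (\<Sum>i<a. if i = x - A \<and> A \<le> x then c i else 0)" for x
    by (rule sum.cong) (auto simp: unitv_def)
  then show ?thesis
    by (auto simp: lincomb_def fun_eq_iff sum.delta')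
qed

definition join_coeffs :: "nat \<Rightarrow> (nat \<Rightarrow> 'a) \<Rightarrow> (nat \<Rightarrow> 'a) \<Rightarrow> nat \<Rightarrow> 'a" where
  "join_coeffs k c d = (\<lambda>i. if i < k then c i else d (i - k))"

lemma lincomb_join_coeffs:
  "lincomb (join_coeffs (length xs) c d) (xs @ ys) = lincomb c xs + lincomb d ys"
  unfolding lincomb_append
  by (rule arg_cong2[where f = "(+)"]; rule lincomb_cong; simp add: join_coeffs_def)

text \<open>A row b of local coefficients with respect to the queue contents Q stands for the global
  vector lincomb b Q; hence the lists D @ map (\<lambda>b. lincomb b Q) W below.\<close>

lemma lincomb_decoded_eq:
  "lincomb c (D @ map (\<lambda>b. lincomb b Q) W) = lincomb c D + lincomb (lincomb (\<lambda>i. c (i + length D)) W) Q"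
  by (simp add: lincomb_append lincomb_lincomb)

definition lspan :: "(nat \<Rightarrow> 'a::field) list \<Rightarrow> (nat \<Rightarrow> 'a) set" where
  "lspan vs = range (\<lambda>c. lincomb c vs)"

lemma lincomb_in_lspan [intro, simp]: "lincomb c vs \<in> lspan vs"
  by (simp add: lspan_def)

lemma zero_in_lspan [simp]: "0 \<in> lspan vs"
  using lincomb_in_lspan[of 0 vs] by simp

lemma lspan_Nil [simp]: "lspan [] = {0}"
  by (auto simp: lspan_def)

lemma set_subset_lspan: "set vs \<subseteq> lspan vs"
  by (auto simp: lspan_def in_set_conv_nth lincomb_unitv[symmetric])

lemma span_set_eq_lspan: "fv.span (set vs) = lspan vs"
proof (induction vs)
  case Nil
  then show ?case by (simp add: zero_fun_def)
next
  case (Cons v vs)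
  have "x \<in> lspan (v # vs) \<longleftrightarrow> (\<exists>k. x - sc k v \<in> lspan vs)" for x
  proof
    assume "x \<in> lspan (v # vs)"
    then obtain c where "x = lincomb c (v # vs)" by (auto simp: lspan_def)
    then have "x - sc (c 0) v \<in> lspan vs" by (simp add: lincomb_Cons)
    then show "\<exists>k. x - sc k v \<in> lspan vs" ..
  next
    assume "\<exists>k. x - sc k v \<in> lspan vs"
    then obtain k c where "x - sc k v = lincomb c vs" by (auto simp: lspan_def)
    then have "x = lincomb (\<lambda>i. case i of 0 \<Rightarrow> k | Suc j \<Rightarrow> c j) (v # vs)"
      by (simp add: lincomb_Cons algebra_simps)
    then show "x \<in> lspan (v # vs)" by (simp add: lspan_def)
  qed
  then show ?case
    unfolding list.set fv.span_insert Cons.IH by blast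
qed

lemma lspan_append: "lspan (xs @ ys) = {u + v |u v. u \<in> lspan xs \<and> v \<in> lspan ys}"
proof
  show "lspan (xs @ ys) \<subseteq> {u + v |u v. u \<in> lspan xs \<and> v \<in> lspan ys}"
    by (auto simp: lspan_def lincomb_append)
  show "{u + v |u v. u \<in> lspan xs \<and> v \<in> lspan ys} \<subseteq> lspan (xs @ ys)"
    by (auto simp: lspan_def) (metis lincomb_join_coeffs rangeI)
qed

lemma lspan_map_lincomb: "lspan (map (\<lambda>b. lincomb b Q) W) = (\<lambda>b. lincomb b Q) ` lspan W"
  by (auto simp: lspan_def lincomb_lincomb)

lemma lspan_append_decoded:
  "lspan (D @ map (\<lambda>b. lincomb b Q) W) = {d + lincomb b Q |d b. d \<in> lspan D \<and> b \<in> lspan W}"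
  unfolding lspan_append lspan_map_lincomb by blast

lemma lspan_append_decoded_cong:
  "lspan W = lspan V \<Longrightarrow> lspan (D @ map (\<lambda>b. lincomb b Q) W) = lspan (D @ map (\<lambda>b. lincomb b Q) V)"
  by (simp add: lspan_append_decoded)

lemma lspan_subset_Fspace: "set vs \<subseteq> Fspace m \<Longrightarrow> lspan vs \<subseteq> Fspace m"
  unfolding Fspace_def lspan_def lincomb_def by (force intro!: sum.neutral dest: nth_mem)

lemma Fspace_eq_lspan_unitv: "Fspace m = lspan (map unitv [0..<m])"
proof safe
  fix v :: "nat \<Rightarrow> 'a" assume "v \<in> Fspace m"
  then have v: "v = lincomb v (map unitv [0..<m])"
    by (auto simp: lincomb_unitv_upt Fspace_def fun_eq_iff)
  show "v \<in> lspan (map unitv [0..<m])" by (subst v) (rule lincomb_in_lspan)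
qed (auto simp: lspan_def lincomb_unitv_upt Fspace_def)

lemma map_lincomb_unitv_upt: "map (\<lambda>b. lincomb b Q) (map unitv [0..<length Q]) = Q"
  by (rule nth_equalityI) (auto simp: lincomb_unitv)

lemma lincomb_append_Fspace: "b \<in> Fspace (length xs) \<Longrightarrow> lincomb b (xs @ ys) = lincomb b xs"
proof -
  assume "b \<in> Fspace (length xs)"
  then have "lincomb (\<lambda>i. b (i + length xs)) ys = lincomb (\<lambda>i. 0) ys"
    by (intro lincomb_cong) (auto simp: Fspace_def)
  then show ?thesis by (simp add: lincomb_append)
qed

definition indep_list :: "(nat \<Rightarrow> 'a::field) list \<Rightarrow> bool" where
  "indep_list vs \<longleftrightarrow> (\<forall>c. lincomb c vs = 0 \<longrightarrow> (\<forall>i<length vs. c i = 0))"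

lemma indep_list_Cons: "indep_list (v # vs) \<longleftrightarrow> indep_list vs \<and> v \<notin> lspan vs"
proof (intro iffI conjI)
  assume indep: "indep_list (v # vs)"
  show "indep_list vs"
    unfolding indep_list_def
  proof (intro allI impI)
    fix c i assume "lincomb c vs = 0" "i < length vs"
    then show "c i = 0"
      using indep[unfolded indep_list_def, rule_format, of "\<lambda>i. case i of 0 \<Rightarrow> 0 | Suc j \<Rightarrow> c j" "Suc i"]
      by (simp add: lincomb_Cons sc_def zero_fun_def)
  qed
  show "v \<notin> lspan vs"
  proof
    assume "v \<in> lspan vs"
    then obtain c where "v = lincomb c vs" by (auto simp: lspan_def)
    then have "lincomb (\<lambda>i. case i of 0 \<Rightarrow> -1 | Suc j \<Rightarrow> c j) (v # vs) = 0"
      by (simp add: lincomb_Cons sc_def fun_eq_iff)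
    then show False
      using indep[unfolded indep_list_def, rule_format, of _ 0] by fastforce
  qed
next
  assume "indep_list vs \<and> v \<notin> lspan vs"
  then have indep: "indep_list vs" and v: "v \<notin> lspan vs" by auto
  show "indep_list (v # vs)"
    unfolding indep_list_def
  proof (intro allI impI)
    fix c i assume c: "lincomb c (v # vs) = 0" and i: "i < length (v # vs)"
    have c0: "c 0 = 0"
    proof (rule ccontr)
      assume "c 0 \<noteq> 0"
      moreover have "sc (c 0) v = - lincomb (\<lambda>i. c (Suc i)) vs"
        using c by (simp add: lincomb_Cons eq_neg_iff_add_eq_0)
      ultimately have "v = sc (- inverse (c 0)) (lincomb (\<lambda>i. c (Suc i)) vs)"
        by (auto simp: sc_def fun_eq_iff field_simps)
      with v show False
        by (simp add: lincomb_scale[symmetric])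
    qed
    with c have "lincomb (\<lambda>i. c (Suc i)) vs = 0"
      by (simp add: lincomb_Cons sc_def zero_fun_def)
    then show "c i = 0" using indep c0 i unfolding indep_list_def by (cases i) auto
  qed
qed

lemma distinct_independent_iff_indep_list: "distinct vs \<and> fv.independent (set vs) \<longleftrightarrow> indep_list vs"
proof (induction vs)
  case Nil
  then show ?case by (simp add: indep_list_def fv.independent_empty)
next
  case (Cons v vs)
  then show ?case
    using set_subset_lspan[of vs]
    by (auto simp: indep_list_Cons fv.independent_insert span_set_eq_lspan)
qed

lemma dim_lspan: "indep_list vs \<Longrightarrow> fv.dim (lspan vs) = length vs"
  using distinct_independent_iff_indep_list[of vs] fv.dim_span_eq_card_independent[of "set vs"]
  by (simp add: span_set_eq_lspan distinct_card)

lemma indep_list_appendD: "indep_list (xs @ ys) \<Longrightarrow> indep_list xs"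
  unfolding indep_list_def
proof (intro allI impI)
  fix c i assume indep: "\<forall>c. lincomb c (xs @ ys) = 0 \<longrightarrow> (\<forall>i<length (xs @ ys). c i = 0)"
    and "lincomb c xs = 0" and i: "i < length xs"
  then have "lincomb (join_coeffs (length xs) c (\<lambda>i. 0)) (xs @ ys) = 0"
    by (simp add: lincomb_join_coeffs)
  with indep have "join_coeffs (length xs) c (\<lambda>i. 0) i = 0"
    using i by simp
  with i show "c i = 0"
    by (simp add: join_coeffs_def)
qed

lemma indep_list_append_unique:
  assumes indep: "indep_list (D @ Q)"
    and "d \<in> lspan D" "d' \<in> lspan D" "b \<in> Fspace (length Q)" "b' \<in> Fspace (length Q)"
    and eq: "d + lincomb b Q = d' + lincomb b' Q"
  shows "d = d' \<and> b = b'"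
proof -
  obtain c c' where d: "d = lincomb c D" and d': "d' = lincomb c' D"
    using assms(2,3) by (auto simp: lspan_def)
  let ?e = "join_coeffs (length D) (\<lambda>i. c i - c' i) (\<lambda>i. b i - b' i)"
  have "lincomb ?e (D @ Q) = 0"
    using eq by (simp add: lincomb_join_coeffs lincomb_diff d d' algebra_simps)
  with indep have e: "?e i = 0" if "i < length D + length Q" for i
    using that unfolding indep_list_def by simp
  have "lincomb c D = lincomb c' D"
  proof (rule lincomb_cong)
    show "c i = c' i" if "i < length D" for i
      using e[of i] that by (simp add: join_coeffs_def)
  qed
  moreover have "b i = b' i" for i
  proof (cases "i < length Q")
    case True
    then show ?thesis using e[of "i + length D"] by (simp add: join_coeffs_def)
  next
    case False
    then show ?thesis using assms(4,5) by (simp add: Fspace_def)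
  qed
  ultimately show ?thesis by (simp add: d d' fun_eq_iff)
qed

lemma indep_list_append_decoded:
  assumes indep: "indep_list (D @ Q)" and W: "set W \<subseteq> Fspace (length Q)" "indep_list W"
  shows "indep_list (D @ map (\<lambda>b. lincomb b Q) W)"
  unfolding indep_list_def
proof (intro allI impI)
  fix c i
  assume "lincomb c (D @ map (\<lambda>b. lincomb b Q) W) = 0"
    and i: "i < length (D @ map (\<lambda>b. lincomb b Q) W)"
  then have "lincomb c D + lincomb (lincomb (\<lambda>i. c (i + length D)) W) Q = 0 + lincomb (\<lambda>i. 0) Q"
    by (simp add: lincomb_decoded_eq)
  from indep_list_append_unique[OF indep lincomb_in_lspan _ _ _ this]
  have "lincomb c D = 0" and "lincomb (\<lambda>i. c (i + length D)) W = (\<lambda>i. 0)"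
    using lspan_subset_Fspace[OF W(1)] lincomb_in_lspan[of "\<lambda>i. 0" D] by (auto simp: Fspace_def)
  then have shifted: "lincomb (\<lambda>i. c (i + length D)) W = 0"
    by (simp add: fun_eq_iff)
  show "c i = 0"
  proof (cases "i < length D")
    case True
    with \<open>lincomb c D = 0\<close> indep_list_appendD[OF indep] show ?thesis
      unfolding indep_list_def by blast
  next
    case False
    with i have "c (i - length D + length D) = 0"
      using W(2)[unfolded indep_list_def, rule_format, OF shifted, of "i - length D"] by simp
    with False show ?thesis by simp
  qed
qed

lemma indep_list_append_unitv:
  assumes indep: "indep_list P" and P: "set P \<subseteq> Fspace A"
  shows "indep_list (P @ map (\<lambda>k. unitv (A + k)) [0..<a])"
  unfolding indep_list_def
proof (intro allI impI)
  fix c i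
  assume c: "lincomb c (P @ map (\<lambda>k. unitv (A + k)) [0..<a]) = 0"
    and i: "i < length (P @ map (\<lambda>k. unitv (A + k)) [0..<a])"
  have sum: "lincomb c P + (\<lambda>x. if A \<le> x \<and> x < A + a then c (x - A + length P) else 0) = 0"
    using c by (simp add: lincomb_append lincomb_shifted_unitv)
  have new: "c (k + length P) = 0" if "k < a" for k
  proof -
    have "lincomb c P \<in> Fspace A"
      using lspan_subset_Fspace[OF P] by blast
    then have "lincomb c P (A + k) = 0"
      by (simp add: Fspace_def)
    then show ?thesis using fun_cong[OF sum, of "A + k"] that by simp
  qed
  have "c (x + length P - A) = 0" if "A \<le> x" "x < A + a" for x
  proof -
    have "x + length P - A = (x - A) + length P" using that(1) by simp
    then show ?thesis using new[of "x - A"] that by simp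
  qed
  then have "lincomb (\<lambda>k. c (k + length P)) (map (\<lambda>k. unitv (A + k)) [0..<a]) = 0"
    by (simp add: lincomb_shifted_unitv fun_eq_iff)
  with c have "lincomb c P = 0"
    by (simp add: lincomb_append)
  with indep i new[of "i - length P"] show "c i = 0"
    unfolding indep_list_def by (cases "i < length P") auto
qed

lemma lspan_append_unitv:
  assumes "lspan P = Fspace A"
  shows "lspan (P @ map (\<lambda>k. unitv (A + k)) [0..<a]) = Fspace (A + a)"
proof
  have "lspan (map (\<lambda>k. unitv (A + k)) [0..<a]) \<subseteq> Fspace (A + a)"
    by (auto simp: lspan_def lincomb_shifted_unitv Fspace_def)
  moreover have "Fspace A \<subseteq> Fspace (A + a)"
    by (auto simp: Fspace_def)
  ultimately show "lspan (P @ map (\<lambda>k. unitv (A + k)) [0..<a]) \<subseteq> Fspace (A + a)"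
    using assms by (auto simp: lspan_append Fspace_def)
next
  show "Fspace (A + a) \<subseteq> lspan (P @ map (\<lambda>k. unitv (A + k)) [0..<a])"
  proof
    fix v :: "nat \<Rightarrow> 'a" assume v: "v \<in> Fspace (A + a)"
    have "(\<lambda>i. if i < A then v i else 0) \<in> lspan P"
      using assms by (simp add: Fspace_def)
    moreover have "(\<lambda>x. if A \<le> x \<and> x < A + a then v (A + (x - A)) else 0)
        \<in> lspan (map (\<lambda>k. unitv (A + k)) [0..<a])"
      using lincomb_in_lspan[of "\<lambda>k. v (A + k)" "map (\<lambda>k. unitv (A + k)) [0..<a]"]
      unfolding lincomb_shifted_unitv .
    moreover have "v = (\<lambda>i. if i < A then v i else 0) + (\<lambda>x. if A \<le> x \<and> x < A + a then v (A + (x - A)) else 0)"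
      using v by (auto simp: Fspace_def fun_eq_iff)
    ultimately show "v \<in> lspan (P @ map (\<lambda>k. unitv (A + k)) [0..<a])"
      unfolding lspan_append by blast
  qed
qed

lemma Inter_lspan_eq_zero_imp_pos:
  fixes W :: "nat \<Rightarrow> (nat \<Rightarrow> 'a::field) list"
  assumes "(\<Inter>j<n. lspan (W j)) = {0}"
  shows "0 < n"
proof (rule ccontr)
  assume "\<not> 0 < n"
  then have "(\<lambda>i. 1) \<in> (\<Inter>j<n. lspan (W j))" by (simp add: not_less)
  with assms show False by (simp add: fun_eq_iff)
qed

lemma Inter_lspan_decoded:
  fixes W :: "nat \<Rightarrow> (nat \<Rightarrow> 'a::field) list"
  assumes indep: "indep_list (D @ Q)" and W: "\<forall>j<n. set (W j) \<subseteq> Fspace (length Q)"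
    and disjoint: "(\<Inter>j<n. lspan (W j)) = {0}"
  shows "(\<Inter>j<n. lspan (D @ map (\<lambda>b. lincomb b Q) (W j))) = lspan D"
proof
  have "d = d + lincomb 0 Q" "0 \<in> lspan (W j)" for d j
    by simp_all
  then show "lspan D \<subseteq> (\<Inter>j<n. lspan (D @ map (\<lambda>b. lincomb b Q) (W j)))"
    unfolding lspan_append_decoded by blast
next
  show "(\<Inter>j<n. lspan (D @ map (\<lambda>b. lincomb b Q) (W j))) \<subseteq> lspan D"
  proof
    fix v assume "v \<in> (\<Inter>j<n. lspan (D @ map (\<lambda>b. lincomb b Q) (W j)))"
    then have split: "\<exists>d b. d \<in> lspan D \<and> b \<in> lspan (W j) \<and> v = d + lincomb b Q" if "j < n" for j
      using that unfolding lspan_append_decoded by blast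
    obtain d0 b0 where d0: "d0 \<in> lspan D" and b0: "b0 \<in> lspan (W 0)" and v: "v = d0 + lincomb b0 Q"
      using split[OF Inter_lspan_eq_zero_imp_pos[OF disjoint]] by blast
    have Fspace: "b \<in> Fspace (length Q)" if "j < n" "b \<in> lspan (W j)" for j b
      using lspan_subset_Fspace W that by blast
    have "b0 \<in> lspan (W j)" if j: "j < n" for j
    proof -
      obtain d b where "d \<in> lspan D" "b \<in> lspan (W j)" "v = d + lincomb b Q"
        using split[OF j] by blast
      moreover have "b0 \<in> Fspace (length Q)"
        using Fspace[OF Inter_lspan_eq_zero_imp_pos[OF disjoint] b0] .
      ultimately show ?thesis
        using indep_list_append_unique[OF indep d0, of d b0 b] Fspace[OF j] v by auto
    qed
    with disjoint have "b0 = 0" by blast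
    with d0 v show "v \<in> lspan D"
      by simp
  qed
qed

lemma span_insert_eq_lspan_snoc: "fv.span A = lspan vs \<Longrightarrow> fv.span (insert x A) = lspan (vs @ [x])"
  by (simp add: fv.span_insert span_set_eq_lspan[symmetric])

lemma span_rcv_update:
  assumes "fv.span R = lspan (D @ map (\<lambda>b. lincomb b Q) B)"
    and "B' = B @ [g] \<and> R' = insert (lincomb g Q) R \<or> B' = B \<and> R' = R"
  shows "fv.span R' = lspan (D @ map (\<lambda>b. lincomb b Q) B')"
  using assms(2)
proof
  assume "B' = B @ [g] \<and> R' = insert (lincomb g Q) R"
  then show ?thesis
    using span_insert_eq_lspan_snoc[OF assms(1)] by simp
qed (use assms(1) in simp)

definition queue_invariant :: "nat \<Rightarrow> 'a::field state \<Rightarrow> (nat \<Rightarrow> 'a) list \<Rightarrow> bool" where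
  "queue_invariant n s D \<longleftrightarrow>
     bB s = map unitv [0..<length (queue s)] \<and>
     indep_list (D @ queue s) \<and> lspan (D @ queue s) = Fspace (arr s) \<and>
     (\<forall>j<n. set (bBj s j) \<subseteq> Fspace (length (queue s)) \<and>
            know s j = lspan (D @ map (\<lambda>b. lincomb b (queue s)) (bBj s j))) \<and>
     (\<Inter>j<n. lspan (bBj s j)) = {0}"

lemma queue_invariant_init: "0 < n \<Longrightarrow> queue_invariant n init_state []"
  by (auto simp: queue_invariant_def init_state_def indep_list_def know_def Fspace_def fun_eq_iff)

lemma queue_invariant_arrive:
  assumes "queue_invariant n s D"
  shows "queue_invariant n (arrive a s) D"
proof -
  let ?U = "map (\<lambda>k. unitv (arr s + k)) [0..<a]"
  have inv: "indep_list (D @ queue s)" "lspan (D @ queue s) = Fspace (arr s)"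
    "\<forall>j<n. set (bBj s j) \<subseteq> Fspace (length (queue s)) \<and>
           know s j = lspan (D @ map (\<lambda>b. lincomb b (queue s)) (bBj s j))"
    "(\<Inter>j<n. lspan (bBj s j)) = {0}"
    using assms by (simp_all add: queue_invariant_def)
  have indep: "indep_list (D @ queue s @ ?U)"
    using indep_list_append_unitv[OF inv(1)] set_subset_lspan[of "D @ queue s"] inv(2) by simp
  have span: "lspan (D @ queue s @ ?U) = Fspace (arr s + a)"
    using lspan_append_unitv[OF inv(2)] by simp
  have rows: "set (bBj s j) \<subseteq> Fspace (length (queue s @ ?U))" if "j < n" for j
    using inv(3) that by (force simp: Fspace_def)
  have know: "know s j = lspan (D @ map (\<lambda>b. lincomb b (queue s @ ?U)) (bBj s j))"
    if "j < n" for j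
  proof -
    have decode: "map (\<lambda>b. lincomb b (queue s @ ?U)) (bBj s j) = map (\<lambda>b. lincomb b (queue s)) (bBj s j)"
      using inv(3) that by (auto intro: lincomb_append_Fspace)
    have "know s j = lspan (D @ map (\<lambda>b. lincomb b (queue s)) (bBj s j))"
      using inv(3) that by blast
    then show ?thesis
      by (simp only: decode)
  qed
  show ?thesis
    unfolding queue_invariant_def
    using indep span rows know inv(4) by (simp add: arrive_def know_def)
qed

lemma slot_restE:
  assumes "slot_rest n s s'"
  obtains g B' bD bpp X where
    "\<forall>j<n. B' j = bBj s j @ [g] \<and> rcv s' j = insert (lincomb g (queue s)) (rcv s j) \<or>
           B' j = bBj s j \<and> rcv s' j = rcv s j"
    "indep_list (bD @ bpp)" "lspan (bD @ bpp) = lspan (bB s)" "lspan bD = (\<Inter>j<n. lspan (B' j))"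
    "\<forall>j<n. lspan (bD @ map (\<lambda>x. lincomb x bpp) (X j)) = lspan (B' j) \<and> set (X j) \<subseteq> Fspace (length bpp)"
    "queue s' = map (\<lambda>h. lincomb h (queue s)) bpp" "bB s' = map unitv [0..<length bpp]"
    "bBj s' = X" "arr s' = arr s"
  using assms unfolding slot_rest_def Let_def
proof (elim exE conjE, goal_cases)
  case (1 g R bD bpp bjpp X)
  let ?B' = "\<lambda>j. if g \<noteq> 0 \<and> j \<in> R then bBj s j @ [g] else bBj s j"
  have rows: "lspan (bD @ map (\<lambda>x. lincomb x bpp) (X j)) = lspan (?B' j) \<and> set (X j) \<subseteq> Fspace (length bpp)"
    if "j < n" for j
  proof -
    have "lspan (bD @ bjpp j) = lspan (?B' j)" "map (\<lambda>x. lincomb x bpp) (X j) = bjpp j"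
      "\<forall>x\<in>set (X j). x \<in> Fspace (length bpp)"
      using 1(10) that unfolding span_set_eq_lspan by blast+
    then show ?thesis by auto
  qed
  show ?thesis
  proof (rule 1(1)[of ?B' g bD bpp X])
    show "indep_list (bD @ bpp)"
      using 1(7,8) distinct_independent_iff_indep_list by blast
  qed (use 1(6,9,11)[unfolded span_set_eq_lspan] rows in \<open>simp_all\<close>)
qed

text \<open>Steps 6--8 leave no common knowledge in the new matrices X_j: all of it went into B_Delta.\<close>

lemma Inter_lspan_reduced_eq_zero:
  fixes X :: "nat \<Rightarrow> (nat \<Rightarrow> 'a::field) list"
  assumes indep: "indep_list (bD @ bpp)" and common: "lspan bD = (\<Inter>j<n. lspan (B' j))"
    and rows: "\<forall>j<n. lspan (bD @ map (\<lambda>x. lincomb x bpp) (X j)) = lspan (B' j) \<and>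
                     set (X j) \<subseteq> Fspace (length bpp)"
    and "0 < n"
  shows "(\<Inter>j<n. lspan (X j)) = {0}"
proof -
  have "b = 0" if b: "b \<in> (\<Inter>j<n. lspan (X j))" for b
  proof -
    have "lincomb b bpp \<in> lspan (B' j)" if j: "j < n" for j
    proof -
      have "b \<in> lspan (X j)"
        using b j by simp
      then have "0 + lincomb b bpp \<in> lspan (bD @ map (\<lambda>x. lincomb x bpp) (X j))"
        unfolding lspan_append_decoded using zero_in_lspan by blast
      with rows j show ?thesis by simp
    qed
    then have "lincomb b bpp \<in> lspan bD"
      unfolding common by simp
    moreover have "b \<in> Fspace (length bpp)"
    proof -
      have "set (X 0) \<subseteq> Fspace (length bpp)" "b \<in> lspan (X 0)"
        using rows b \<open>0 < n\<close> by simp_all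
      then show ?thesis
        using lspan_subset_Fspace by blast
    qed
    ultimately show "b = 0"
      using indep_list_append_unique[OF indep, of "lincomb b bpp" 0 0 b]
      by (simp add: Fspace_def)
  qed
  then show ?thesis by auto
qed

lemma queue_invariant_slot_rest:
  assumes inv: "queue_invariant n s D" and step: "slot_rest n s s'"
  shows "\<exists>D'. queue_invariant n s' D'"
proof -
  let ?L = "\<lambda>b. lincomb b (queue s)"
  obtain g B' bD bpp X where
    received: "\<forall>j<n. B' j = bBj s j @ [g] \<and> rcv s' j = insert (?L g) (rcv s j) \<or>
                     B' j = bBj s j \<and> rcv s' j = rcv s j"
    and indep: "indep_list (bD @ bpp)" and span: "lspan (bD @ bpp) = lspan (bB s)"
    and common: "lspan bD = (\<Inter>j<n. lspan (B' j))"
    and rows: "\<forall>j<n. lspan (bD @ map (\<lambda>x. lincomb x bpp) (X j)) = lspan (B' j) \<and>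
                     set (X j) \<subseteq> Fspace (length bpp)"
    and s': "queue s' = map ?L bpp" "bB s' = map unitv [0..<length bpp]" "bBj s' = X" "arr s' = arr s"
    by (rule slot_restE[OF step])
  have old: "bB s = map unitv [0..<length (queue s)]" "indep_list (D @ queue s)"
    "lspan (D @ queue s) = Fspace (arr s)"
    "\<forall>j<n. set (bBj s j) \<subseteq> Fspace (length (queue s)) \<and> know s j = lspan (D @ map ?L (bBj s j))"
    "(\<Inter>j<n. lspan (bBj s j)) = {0}"
    using inv by (simp_all add: queue_invariant_def)
  have basis: "lspan (bD @ bpp) = Fspace (length (queue s))"
    using span old(1) by (simp add: Fspace_eq_lspan_unitv)
  have queue: "D @ map ?L bD @ queue s' = D @ map ?L (bD @ bpp)"
    using s'(1) by simp
  have "bB s' = map unitv [0..<length (queue s')]"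
    by (simp add: s'(1,2))
  moreover have "indep_list (D @ map ?L bD @ queue s')"
    unfolding queue using indep_list_append_decoded[OF old(2) _ indep] basis set_subset_lspan[of "bD @ bpp"]
    by simp
  moreover have "lspan (D @ map ?L bD @ queue s') = Fspace (arr s')"
    unfolding queue lspan_append_decoded_cong[OF basis[unfolded Fspace_eq_lspan_unitv]]
      map_lincomb_unitv_upt s'(4) old(3) ..
  moreover have "set (bBj s' j) \<subseteq> Fspace (length (queue s'))" if "j < n" for j
    using rows that by (simp add: s'(1,3))
  moreover have "know s' j = lspan (D @ map ?L bD @ map (\<lambda>b. lincomb b (queue s')) (bBj s' j))"
    if j: "j < n" for j
  proof -
    have "know s' j = lspan (D @ map ?L (B' j))"
      unfolding know_def
    proof (rule span_rcv_update)
      show "fv.span (rcv s j) = lspan (D @ map ?L (bBj s j))"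
        using old(4) j by (simp add: know_def)
    qed (use received j in blast)
    also have "\<dots> = lspan (D @ map ?L (bD @ map (\<lambda>x. lincomb x bpp) (X j)))"
      using rows j by (intro lspan_append_decoded_cong) simp
    also have "\<dots> = lspan (D @ map ?L bD @ map (\<lambda>b. lincomb b (queue s')) (bBj s' j))"
      by (simp add: s'(1,3) lincomb_lincomb comp_def)
    finally show ?thesis .
  qed
  moreover have "(\<Inter>j<n. lspan (bBj s' j)) = {0}"
    unfolding s'(3) using Inter_lspan_reduced_eq_zero[OF indep common rows Inter_lspan_eq_zero_imp_pos[OF old(5)]] .
  ultimately have "queue_invariant n s' (D @ map ?L bD)"
    unfolding queue_invariant_def append_assoc by blast
  then show ?thesis ..
qed

lemma queue_length_eq_dim_diff:
  fixes s :: "'a::field state"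
  assumes "queue_invariant n s D"
  shows "length (queue s) = fv.dim (Fspace (arr s) :: (nat \<Rightarrow> 'a) set) - fv.dim (\<Inter>j<n. know s j)"
proof -
  have inv: "indep_list (D @ queue s)" "lspan (D @ queue s) = Fspace (arr s)"
    "\<forall>j<n. set (bBj s j) \<subseteq> Fspace (length (queue s)) \<and>
           know s j = lspan (D @ map (\<lambda>b. lincomb b (queue s)) (bBj s j))"
    "(\<Inter>j<n. lspan (bBj s j)) = {0}"
    using assms by (simp_all add: queue_invariant_def)
  have "(\<Inter>j<n. know s j) = (\<Inter>j<n. lspan (D @ map (\<lambda>b. lincomb b (queue s)) (bBj s j)))"
    using inv(3) by simp
  also have "\<dots> = lspan D"
    using Inter_lspan_decoded[OF inv(1)] inv(3,4) by simp
  finally have "fv.dim (\<Inter>j<n. know s j) = length D"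
    using dim_lspan[OF indep_list_appendD[OF inv(1)]] by simp
  moreover have "fv.dim (Fspace (arr s) :: (nat \<Rightarrow> 'a) set) = length D + length (queue s)"
    using dim_lspan[OF inv(1)] inv(2) by simp
  ultimately show ?thesis by simp
qed

lemma slot_rest_arr: "slot_rest n s s' \<Longrightarrow> arr s' = arr s"
  by (erule slot_restE) simp

lemma queue_invariant_run:
  fixes s :: "nat \<Rightarrow> 'a::field state"
  assumes "0 < n" and "s 0 = init_state"
    and run: "\<forall>\<tau><t. slot_rest n (arrive (a \<tau>) (s \<tau>)) (s (Suc \<tau>))"
  shows "\<tau> \<le> t \<Longrightarrow> (\<exists>D. queue_invariant n (s \<tau>) D) \<and> arr (s \<tau>) = (\<Sum>i<\<tau>. a i)"
proof (induction \<tau>)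
  case 0
  have "queue_invariant n (s 0) []"
    using queue_invariant_init assms(1,2) by simp
  then show ?case
    using assms(2) by (auto simp: init_state_def)
next
  case (Suc \<tau>)
  then obtain D where D: "queue_invariant n (s \<tau>) D" and arr: "arr (s \<tau>) = (\<Sum>i<\<tau>. a i)"
    by auto
  have step: "slot_rest n (arrive (a \<tau>) (s \<tau>)) (s (Suc \<tau>))"
    using Suc.prems run by simp
  have "\<exists>D'. queue_invariant n (s (Suc \<tau>)) D'"
    by (rule queue_invariant_slot_rest[OF queue_invariant_arrive[OF D] step])
  moreover have "arr (s (Suc \<tau>)) = (\<Sum>i<Suc \<tau>. a i)"
    using slot_rest_arr[OF step] arr by (simp add: arrive_def)
  ultimately show ?case by blast
qed

text \<open>The field-size hypothesis only guarantees that Step 4 can always choose g; the identity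
  holds for every admissible run and does not use it.\<close>

theorem theorem4:
  fixes n :: nat and a :: "nat \<Rightarrow> nat" and s :: "nat \<Rightarrow> 'a::{field,finite} state" and t :: nat
  assumes "n \<ge> 1" and "card (UNIV :: 'a set) > n"
    and "s 0 = init_state"
    and "\<forall>\<tau><t. slot_rest n (arrive (a \<tau>) (s \<tau>)) (s (Suc \<tau>))"
  shows "length (queue (arrive (a t) (s t))) =
           fv.dim (Fspace (\<Sum>\<tau>\<le>t. a \<tau>) :: (nat \<Rightarrow> 'a) set) -
           fv.dim (\<Inter>j<n. know (arrive (a t) (s t)) j)"
proof -
  obtain D where D: "queue_invariant n (s t) D" and arr: "arr (s t) = (\<Sum>i<t. a i)"
    using queue_invariant_run[of n s t a t] assms(1,3,4) by auto
  have arrived: "arr (arrive (a t) (s t)) = (\<Sum>\<tau>\<le>t. a \<tau>)"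
    using arr by (simp add: arrive_def lessThan_Suc_atMost[symmetric])
  show ?thesis
    using queue_length_eq_dim_diff[OF queue_invariant_arrive[OF D], of "a t"] unfolding arrived .
qed

end
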